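(* Let $G$ and $H$ be Left dead-ends with $G\neq 0$ and $H\neq 0$. Then no Left dead-end $K$ with $K=G+H$ has $0$ as a Right option.
   Context: Games are finite partizan games; $o(G)$ is the misère outcome class (ordered $\mathscr{L}>\mathscr{N}>\mathscr{R}$, $\mathscr{L}>\mathscr{P}>\mathscr{R}$). A universe is a set of games closed under options, disjunctive sums, conjugates, and forming $\{\mathscr{G}^L\mid\mathscr{G}^R\}$ from nonempty finite subsets of it; $G\geq_\mathcal{U}H$ means $o(G+X)\geq o(H+X)$ for all $X\in\mathcal{U}$. A Left dead-end is a game all of whose subpositions have no Left option. For Left dead-ends, $G\geq H$ means $G\geq_\mathcal{U}H$ for every universe $\mathcal{U}$, and $G=H$ means $G\geq H$ and $H\geq G$. *)

theory Defs
  imports Main "HOL-Library.FSet"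
begin

datatype game = Game (lopts: "game fset") (ropts: "game fset")

definition zero_game :: game where
  "zero_game = Game {||} {||}"

lemma size_lopt[termination_simp]: "x |\<in>| L \<Longrightarrow> size x < size (Game L R)"
  by (induct L) (auto simp: size_fset_overloaded_simps)

lemma size_ropt[termination_simp]: "x |\<in>| R \<Longrightarrow> size x < size (Game L R)"
  by (induct R) (auto simp: size_fset_overloaded_simps)

lemma size_lopt': "(x::game) |\<in>| L \<Longrightarrow> size x < Suc ((\<Sum>y\<in>fset L. Suc (size (y::game))) + (\<Sum>y\<in>fset R. Suc (size (y::game))))"
  using size_lopt[of x L R] by simp

lemma size_ropt': "(x::game) |\<in>| R \<Longrightarrow> size x < Suc ((\<Sum>y\<in>fset L. Suc (size (y::game))) + (\<Sum>y\<in>fset R. Suc (size (y::game))))"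
  using size_ropt[of x R L] by simp

function gsum :: "game \<Rightarrow> game \<Rightarrow> game" where
  "gsum (Game GL GR) (Game HL HR) =
     Game ((\<lambda>x. gsum x (Game HL HR)) |`| GL |\<union>| (\<lambda>y. gsum (Game GL GR) y) |`| HL)
          ((\<lambda>x. gsum x (Game HL HR)) |`| GR |\<union>| (\<lambda>y. gsum (Game GL GR) y) |`| HR)"
  by pat_completeness auto
termination
  by (relation "measure (\<lambda>(G,H). size G + size H)") (auto dest: size_lopt size_ropt)

primrec conj_game :: "game \<Rightarrow> game" where
  "conj_game (Game L R) = Game (conj_game |`| R) (conj_game |`| L)"

text \<open>lwins G: Left, moving first in G, wins under misere play;
  rwins G: Right, moving first in G, wins. A player with no move wins.\<close>
function lwins :: "game \<Rightarrow> bool" and rwins :: "game \<Rightarrow> bool" where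
  "lwins (Game L R) = (L = {||} \<or> (\<exists>x\<in>fset L. \<not> rwins x))"
| "rwins (Game L R) = (R = {||} \<or> (\<exists>x\<in>fset R. \<not> lwins x))"
  by pat_completeness auto
termination
  by (relation "measure (\<lambda>x. case x of Inl G \<Rightarrow> size G | Inr G \<Rightarrow> size G)")
     (simp_all add: size_lopt' size_ropt')

datatype outcome = OutL | OutN | OutP | OutR

definition outcome :: "game \<Rightarrow> outcome" where
  "outcome G = (if lwins G then (if rwins G then OutN else OutL)
                else (if rwins G then OutR else OutP))"

definition outcome_ge :: "outcome \<Rightarrow> outcome \<Rightarrow> bool" where
  "outcome_ge a b = (a = b \<or> a = OutL \<or> b = OutR)"

definition universe :: "game set \<Rightarrow> bool" where
  "universe U \<longleftrightarrow>
     (\<forall>G\<in>U. \<forall>x. (x |\<in>| lopts G \<or> x |\<in>| ropts G) \<longrightarrow> x \<in> U) \<and>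
     (\<forall>G\<in>U. \<forall>H\<in>U. gsum G H \<in> U) \<and>
     (\<forall>G\<in>U. conj_game G \<in> U) \<and>
     (\<forall>A B. A \<noteq> {||} \<and> B \<noteq> {||} \<and> fset A \<subseteq> U \<and> fset B \<subseteq> U \<longrightarrow> Game A B \<in> U)"

definition game_ge_in :: "game set \<Rightarrow> game \<Rightarrow> game \<Rightarrow> bool" where
  "game_ge_in U G H \<longleftrightarrow> (\<forall>X\<in>U. outcome_ge (outcome (gsum G X)) (outcome (gsum H X)))"

inductive subposition :: "game \<Rightarrow> game \<Rightarrow> bool" where
  refl: "subposition G G"
| left: "x |\<in>| lopts G \<Longrightarrow> subposition x G"
| right: "x |\<in>| ropts G \<Longrightarrow> subposition x G"
| trans: "subposition x y \<Longrightarrow> subposition y G \<Longrightarrow> subposition x G"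

definition left_dead_end :: "game \<Rightarrow> bool" where
  "left_dead_end G \<longleftrightarrow> (\<forall>x. subposition x G \<longrightarrow> lopts x = {||})"

definition de_ge :: "game \<Rightarrow> game \<Rightarrow> bool" where
  "de_ge G H \<longleftrightarrow> (\<forall>U. universe U \<longrightarrow> game_ge_in U G H)"

definition de_eq :: "game \<Rightarrow> game \<Rightarrow> bool" where
  "de_eq G H \<longleftrightarrow> de_ge G H \<and> de_ge H G"

end

theory Submission
  imports Defs
begin

(* The game 1 = {0 |} tells K and G + H apart. In K + 1 Left can only move to K + 0 = K, where
   Right, having a move, loses; and Right wins by moving K to 0, leaving Left only the move to 0
   after which Right cannot move. So K + 1 is an N-position. In G + H + 1 Left wins the same way,
   but every Right move in G + H leaves a Right option in the other summand, so Right loses: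
   G + H + 1 is an L-position, and N is not above L. *)

lemma gsum_zero_right [simp]: "gsum G zero_game = G"
  by (induction G) (auto simp: zero_game_def fset.map_ident_strong)

lemma ropts_gsum: "ropts (gsum G H) = (\<lambda>x. gsum x H) |`| ropts G |\<union>| (\<lambda>y. gsum G y) |`| ropts H"
  by (cases G; cases H) simp

lemma subposition_cases:
  "subposition x G \<Longrightarrow> x = G \<or> (\<exists>y. (y |\<in>| lopts G \<or> y |\<in>| ropts G) \<and> subposition x y)"
proof (induction rule: subposition.induct)
  case (trans x y G)
  then show ?case by (metis subposition.trans)
qed (auto intro: subposition.refl)

lemma left_dead_end_Game_iff:
  "left_dead_end (Game L R) \<longleftrightarrow> L = {||} \<and> (\<forall>x. x |\<in>| R \<longrightarrow> left_dead_end x)"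
proof
  assume "left_dead_end (Game L R)"
  then show "L = {||} \<and> (\<forall>x. x |\<in>| R \<longrightarrow> left_dead_end x)"
    unfolding left_dead_end_def
    by (metis game.sel subposition.refl subposition.right subposition.trans)
next
  assume "L = {||} \<and> (\<forall>x. x |\<in>| R \<longrightarrow> left_dead_end x)"
  then show "left_dead_end (Game L R)"
    unfolding left_dead_end_def by (auto dest: subposition_cases)
qed

lemma left_dead_end_gsum: "left_dead_end G \<Longrightarrow> left_dead_end H \<Longrightarrow> left_dead_end (gsum G H)"
proof (induction G H rule: gsum.induct)
  case (1 GL GR HL HR)
  then show ?case by (auto simp: left_dead_end_Game_iff)
qed

lemma left_dead_end_lwins: "left_dead_end G \<Longrightarrow> lwins G"
  by (cases G) (simp add: left_dead_end_Game_iff)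

lemma left_dead_end_rwins_iff: "left_dead_end G \<Longrightarrow> rwins G \<longleftrightarrow> ropts G = {||}"
  by (cases G) (auto simp: left_dead_end_Game_iff left_dead_end_lwins)

lemma left_dead_end_eq_zero_iff: "left_dead_end G \<Longrightarrow> G = zero_game \<longleftrightarrow> ropts G = {||}"
  by (cases G) (auto simp: left_dead_end_Game_iff zero_game_def)

definition one_game :: game where
  "one_game = Game {|zero_game|} {||}"

lemma gsum_one_game:
  "lopts D = {||} \<Longrightarrow> gsum D one_game = Game {|D|} ((\<lambda>x. gsum x one_game) |`| ropts D)"
  by (cases D) (simp add: one_game_def gsum.simps[of _ _ "{|zero_game|}" "{||}"])

lemma lwins_gsum_one_game: "left_dead_end D \<Longrightarrow> lwins (gsum D one_game) \<longleftrightarrow> ropts D \<noteq> {||}"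
  by (cases D) (auto simp: gsum_one_game left_dead_end_Game_iff left_dead_end_rwins_iff
      left_dead_end_lwins)

lemma rwins_gsum_one_game:
  assumes "left_dead_end D"
  shows "rwins (gsum D one_game) \<longleftrightarrow> ropts D = {||} \<or> (\<exists>x. x |\<in>| ropts D \<and> ropts x = {||})"
proof -
  have "left_dead_end x" if "x |\<in>| ropts D" for x
    using assms that by (cases D) (simp add: left_dead_end_Game_iff)
  with assms show ?thesis
    by (cases D) (auto simp: gsum_one_game left_dead_end_Game_iff lwins_gsum_one_game)
qed

lemma universe_UNIV: "universe UNIV"
  by (simp add: universe_def)

lemma de_ge_outcome_ge: "de_ge G H \<Longrightarrow> outcome_ge (outcome (gsum G X)) (outcome (gsum H X))"
  using universe_UNIV by (simp add: de_ge_def game_ge_in_def)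

lemma de_eq_refl: "de_eq G G"
  by (simp add: de_eq_def de_ge_def game_ge_in_def outcome_ge_def)

theorem mainTheorem14:
  assumes "left_dead_end G" and "left_dead_end H"
    and "\<not> de_eq G zero_game" and "\<not> de_eq H zero_game"
  shows "\<not> (\<exists>K. left_dead_end K \<and> de_eq K (gsum G H) \<and> zero_game |\<in>| ropts K)"
proof
  assume "\<exists>K. left_dead_end K \<and> de_eq K (gsum G H) \<and> zero_game |\<in>| ropts K"
  then obtain K where K: "left_dead_end K" "de_eq K (gsum G H)" "zero_game |\<in>| ropts K"
    by blast
  have G_ropts: "ropts G \<noteq> {||}" and H_ropts: "ropts H \<noteq> {||}"
    using assms de_eq_refl left_dead_end_eq_zero_iff by metis+
  have "outcome (gsum K one_game) = OutN"
    using K lwins_gsum_one_game rwins_gsum_one_game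
    by (fastforce simp: outcome_def zero_game_def)
  moreover have "outcome (gsum (gsum G H) one_game) = OutL"
    using G_ropts H_ropts lwins_gsum_one_game rwins_gsum_one_game
      left_dead_end_gsum[OF assms(1,2)]
    by (auto simp: outcome_def ropts_gsum)
  moreover have "outcome_ge (outcome (gsum K one_game)) (outcome (gsum (gsum G H) one_game))"
    using K(2) de_ge_outcome_ge de_eq_def by blast
  ultimately show False
    by (simp add: outcome_ge_def)
qed

end
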